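(* Let $\mathbb{A}$ be a non-empty set, $C$ a finite semigroup and $\varphi:\mathbb{A}^+\to C$ a semigroup morphism. Then every $x\in\mathbb{A}^\omega$ has a suffix $x'$ which admits a $\varphi$-ultra monochromatic factorization.
   Context: $\mathbb{A}^+$ is the free semigroup of non-empty finite words over $\mathbb{A}$ (with concatenation); $\mathbb{A}^\omega$ is the set of right-infinite words over $\mathbb{A}$. A suffix of $x=x_0x_1\cdots$ is $x_nx_{n+1}\cdots$ for some $n\ge0$. A factorization $x'=V_0V_1V_2\cdots$ with all $V_i\in\mathbb{A}^+$ is $\varphi$-ultra monochromatic if there is $c\in C$ such that for all $k\ge1$, all $0\le n_1<n_2<\cdots<n_k$ and all permutations $\sigma$ of $\{1,\dots,k\}$, $\varphi(V_{n_{\sigma(1)}}V_{n_{\sigma(2)}}\cdots V_{n_{\sigma(k)}})=c$. *)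

theory Defs
  imports Main "HOL-Combinatorics.Permutations"
begin

text \<open>Finite words over the alphabet 'a are lists; A^+ = non-empty lists.
  Infinite words are functions nat \<Rightarrow> 'a.
  phi is a semigroup morphism from A^+ to C.\<close>

definition semigroup_morphism :: "('a list \<Rightarrow> 'c::semigroup_mult) \<Rightarrow> bool" where
  "semigroup_morphism \<phi> \<longleftrightarrow>
     (\<forall>u v. u \<noteq> [] \<longrightarrow> v \<noteq> [] \<longrightarrow> \<phi> (u @ v) = \<phi> u * \<phi> v)"

definition suffix_from :: "(nat \<Rightarrow> 'a) \<Rightarrow> nat \<Rightarrow> (nat \<Rightarrow> 'a)" where
  "suffix_from x n = (\<lambda>i. x (n + i))"

fun fact_start :: "(nat \<Rightarrow> 'a list) \<Rightarrow> nat \<Rightarrow> nat" where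
  "fact_start V 0 = 0"
| "fact_start V (Suc k) = fact_start V k + length (V k)"

definition is_factorization :: "(nat \<Rightarrow> 'a) \<Rightarrow> (nat \<Rightarrow> 'a list) \<Rightarrow> bool" where
  "is_factorization x V \<longleftrightarrow>
     (\<forall>k. V k \<noteq> []) \<and>
     (\<forall>k i. i < length (V k) \<longrightarrow> x (fact_start V k + i) = V k ! i)"

definition ultra_monochromatic :: "('a list \<Rightarrow> 'c::semigroup_mult) \<Rightarrow> (nat \<Rightarrow> 'a list) \<Rightarrow> bool" where
  "ultra_monochromatic \<phi> V \<longleftrightarrow>
     (\<exists>c. \<forall>k::nat. \<forall>n::nat \<Rightarrow> nat. \<forall>\<sigma>::nat \<Rightarrow> nat.
        k \<ge> 1 \<longrightarrow>
        (\<forall>i j. 1 \<le> i \<longrightarrow> i < j \<longrightarrow> j \<le> k \<longrightarrow> n i < n j) \<longrightarrow>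
        \<sigma> permutes {1..k} \<longrightarrow>
        \<phi> (concat (map (\<lambda>i. V (n (\<sigma> i))) [1..<k+1])) = c)"

end

theory Submission
  imports Defs "HOL-Library.Ramsey"
begin

text \<open>Colour each pair \<open>i < j\<close> of positions of \<open>x\<close> by \<open>\<phi>(x\<^sub>i \<dots> x\<^sub>j\<^sub>-\<^sub>1)\<close>. By Ramsey's
  theorem for pairs there are positions \<open>r\<^sub>0 < r\<^sub>1 < \<dots>\<close> on which this colouring is
  constant, say \<open>e\<close>. Cutting \<open>x\<close> at these positions factorizes its suffix from \<open>r\<^sub>0\<close> into
  blocks of colour \<open>e\<close>, and since the first two blocks together again span two cut
  positions, \<open>e * e = e\<close>. Hence any non-empty product of blocks, in any order, has
  colour \<open>e\<close>.\<close>

lemma ramsey_pairs_strict_mono: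
  fixes c :: "nat \<Rightarrow> nat \<Rightarrow> 'c::finite"
  obtains r :: "nat \<Rightarrow> nat" and e where "strict_mono r" "\<And>a b. a < b \<Longrightarrow> c (r a) (r b) = e"
proof -
  obtain idx :: "'c \<Rightarrow> nat" and N where idx: "idx ` UNIV = {..<N}" "inj idx"
    using finite_imp_inj_to_nat_seg[of "UNIV :: 'c set"] by (auto simp: lessThan_def)
  define f where "f X = idx (c (Min X) (Max X))" for X :: "nat set"
  have "\<forall>a\<in>UNIV. \<forall>b\<in>UNIV. a \<noteq> b \<longrightarrow> f {a, b} < N"
    using idx(1) unfolding f_def by auto
  then obtain Y t where Y: "infinite Y" "\<forall>a\<in>Y. \<forall>b\<in>Y. a \<noteq> b \<longrightarrow> f {a, b} = t"
    using Ramsey2[of UNIV f N] by auto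
  obtain r :: "nat \<Rightarrow> nat" where r: "strict_mono r" "\<And>n. r n \<in> Y"
    using infinite_enumerate[OF Y(1)] by blast
  have "c (r a) (r b) = inv idx t" if "a < b" for a b
  proof -
    have "r a < r b" using r(1) that by (rule strict_monoD)
    moreover have "f {r a, r b} = t"
      using Y(2) r(2) \<open>r a < r b\<close> by simp
    ultimately have "idx (c (r a) (r b)) = t"
      unfolding f_def by (simp add: min_def max_def)
    then show ?thesis using idx(2) by (metis inv_f_f)
  qed
  then show thesis using r(1) that by blast
qed

lemma is_factorization_cuts:
  assumes "strict_mono r"
  shows "is_factorization (suffix_from x (r 0)) (\<lambda>n. map x [r n..<r (Suc n)])"
    (is "is_factorization _ ?V")
proof -
  have start: "fact_start ?V k = r k - r 0" for k
  proof (induction k)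
    case (Suc k)
    have "r k \<le> r (Suc k)" "r 0 \<le> r k"
      using assms by (simp_all add: strict_mono_less_eq)
    then show ?case using Suc by simp
  qed simp
  show ?thesis
    unfolding is_factorization_def suffix_from_def start
  proof (intro conjI allI impI)
    fix k i
    have "r k < r (Suc k)"
      using assms by (rule strict_monoD) simp
    then show "?V k \<noteq> []" by simp
    have "r 0 \<le> r k"
      using assms by (simp add: strict_mono_less_eq)
    then show "x (r 0 + (r k - r 0 + i)) = ?V k ! i" if "i < length (?V k)"
      using that by simp
  qed
qed

lemma semigroup_morphism_concat_idempotent:
  assumes "semigroup_morphism \<phi>" "\<And>j. V j \<noteq> []" "\<And>j. \<phi> (V j) = e" "e * e = e" "L \<noteq> []"
  shows "\<phi> (concat (map V L)) = e"
  using \<open>L \<noteq> []\<close>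
proof (induction L rule: list_nonempty_induct)
  case (cons a L)
  then have "concat (map V L) \<noteq> []" using assms(2) by (cases L) auto
  then have "\<phi> (concat (map V (a # L))) = \<phi> (V a) * \<phi> (concat (map V L))"
    using assms(1,2) unfolding semigroup_morphism_def by simp
  then show ?case using cons.IH assms(3,4) by simp
qed (simp add: assms(3))

lemma ultra_monochromatic_idempotent:
  assumes "semigroup_morphism \<phi>" "\<And>j. V j \<noteq> []" "\<And>j. \<phi> (V j) = e" "e * e = e"
  shows "ultra_monochromatic \<phi> V"
  unfolding ultra_monochromatic_def
proof (intro exI allI impI)
  fix k :: nat and n \<sigma> :: "nat \<Rightarrow> nat"
  assume "1 \<le> k"
  then have "\<phi> (concat (map V (map (\<lambda>i. n (\<sigma> i)) [1..<k+1]))) = e"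
    by (intro semigroup_morphism_concat_idempotent[OF assms]) simp
  then show "\<phi> (concat (map (\<lambda>i. V (n (\<sigma> i))) [1..<k+1])) = e"
    by (simp add: comp_def)
qed

lemma monochromatic_cuts_idempotent:
  fixes r :: "nat \<Rightarrow> nat"
  assumes "semigroup_morphism \<phi>" "strict_mono r"
    and "\<And>a b. a < b \<Longrightarrow> \<phi> (map x [r a..<r b]) = e"
  shows "e * e = e"
proof -
  have r: "r 0 < r 1" "r 1 < r 2"
    using assms(2) by (simp_all add: strict_mono_less)
  then have "map x [r 0..<r 2] = map x [r 0..<r 1] @ map x [r 1..<r 2]"
    by (metis less_imp_le_nat le_add_diff_inverse map_append upt_add_eq_append)
  then have "\<phi> (map x [r 0..<r 2]) = \<phi> (map x [r 0..<r 1]) * \<phi> (map x [r 1..<r 2])"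
    using assms(1) r unfolding semigroup_morphism_def by simp
  then show ?thesis using assms(3) by simp
qed

theorem proposition2p3:
  fixes \<phi> :: "'a list \<Rightarrow> 'c::{finite, semigroup_mult}"
    and x :: "nat \<Rightarrow> 'a"
  assumes "semigroup_morphism \<phi>"
  shows "\<exists>m V. is_factorization (suffix_from x m) V \<and> ultra_monochromatic \<phi> V"
proof -
  obtain r :: "nat \<Rightarrow> nat" and e where r: "strict_mono r"
    and mono: "\<And>a b. a < b \<Longrightarrow> \<phi> (map x [r a..<r b]) = e"
    using ramsey_pairs_strict_mono[of "\<lambda>i j. \<phi> (map x [i..<j])"] by metis
  define V where "V n = map x [r n..<r (Suc n)]" for n
  have "V n \<noteq> []" "\<phi> (V n) = e" for n
    unfolding V_def using strict_monoD[OF r, of n "Suc n"] by (simp_all add: mono)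
  moreover have "e * e = e"
    using assms r mono by (rule monochromatic_cuts_idempotent)
  ultimately have "ultra_monochromatic \<phi> V"
    using assms by (intro ultra_monochromatic_idempotent)
  moreover have "is_factorization (suffix_from x (r 0)) V"
    unfolding V_def using r by (rule is_factorization_cuts)
  ultimately show ?thesis by blast
qed

end
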